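(* Let $r\geq 2$, let $A$ be a nonnegative symmetric cubical $r$-matrix of order $n$, and let $p\geq r$ be real. Then $\eta^{(p)}(A)=\|A\|_p$.
   Context: A cubical $r$-matrix of order $n$ is a function $A$ on $[n]^r$ with values $a_{i_1,\ldots,i_r}$; it is symmetric if $a_{i_1,\ldots,i_r}$ is invariant under all permutations of the indices. For real symmetric $A$, $P_A(\mathbf{x})=\sum_{i_1,\ldots,i_r}a_{i_1,\ldots,i_r}x_{i_1}\cdots x_{i_r}$ for $\mathbf{x}\in\mathbb{R}^n$, and $\eta^{(p)}(A)=\max\{|P_A(\mathbf{x})|:\mathbf{x}\in\mathbb{R}^n,\ |\mathbf{x}|_p=1\}$. The linear form is $L_A(\mathbf{x}^{(1)},\ldots,\mathbf{x}^{(r)})=\sum a_{i_1,\ldots,i_r}\overline{x^{(1)}_{i_1}}\cdots\overline{x^{(r)}_{i_r}}$ for $\mathbf{x}^{(k)}\in\mathbb{C}^{n}$, and the spectral $p$-norm is $\|A\|_p=\max\{|L_A(\mathbf{x}^{(1)},\ldots,\mathbf{x}^{(r)})|:|\mathbf{x}^{(1)}|_p=\cdots=|\mathbf{x}^{(r)}|_p=1\}$, with $|\cdot|_p$ the $\ell^p$ norm. *)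

theory Defs
  imports "HOL-Analysis.Analysis" "HOL-Combinatorics.Permutations"
begin

text \<open>A cubical r-matrix of order n is a function on index tuples in [n]^r.
 Index tuples are lists of length r with entries in {0..<n} (0-based).\<close>

definition index_tuples :: "nat \<Rightarrow> nat \<Rightarrow> nat list set" where
  "index_tuples r n = {is. length is = r \<and> set is \<subseteq> {..<n}}"

definition symmetric_cubical :: "nat \<Rightarrow> nat \<Rightarrow> (nat list \<Rightarrow> 'a) \<Rightarrow> bool" where
  "symmetric_cubical r n A \<longleftrightarrow>
     (\<forall>is \<in> index_tuples r n. \<forall>\<sigma>. \<sigma> permutes {..<r} \<longrightarrow>
        A (map (\<lambda>k. is ! \<sigma> k) [0..<r]) = A is)"

definition lp_norm_real :: "real \<Rightarrow> nat \<Rightarrow> (nat \<Rightarrow> real) \<Rightarrow> real" where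
  "lp_norm_real p n x = (\<Sum>i<n. \<bar>x i\<bar> powr p) powr (1 / p)"

definition lp_norm_complex :: "real \<Rightarrow> nat \<Rightarrow> (nat \<Rightarrow> complex) \<Rightarrow> real" where
  "lp_norm_complex p n x = (\<Sum>i<n. cmod (x i) powr p) powr (1 / p)"

definition poly_form :: "nat \<Rightarrow> nat \<Rightarrow> (nat list \<Rightarrow> real) \<Rightarrow> (nat \<Rightarrow> real) \<Rightarrow> real" where
  "poly_form r n A x = (\<Sum>is \<in> index_tuples r n. A is * (\<Prod>k<r. x (is ! k)))"

definition linear_form :: "nat \<Rightarrow> nat \<Rightarrow> (nat list \<Rightarrow> real) \<Rightarrow> (nat \<Rightarrow> nat \<Rightarrow> complex) \<Rightarrow> complex" where
  "linear_form r n A xs =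
     (\<Sum>is \<in> index_tuples r n. complex_of_real (A is) * (\<Prod>k<r. cnj (xs k (is ! k))))"

definition eta :: "real \<Rightarrow> nat \<Rightarrow> nat \<Rightarrow> (nat list \<Rightarrow> real) \<Rightarrow> real" where
  "eta p r n A = (SUP x \<in> {x. lp_norm_real p n x = 1}. \<bar>poly_form r n A x\<bar>)"

definition spectral_norm :: "real \<Rightarrow> nat \<Rightarrow> nat \<Rightarrow> (nat list \<Rightarrow> real) \<Rightarrow> real" where
  "spectral_norm p r n A =
     (SUP xs \<in> {xs. \<forall>k<r. lp_norm_complex p n (xs k) = 1}. cmod (linear_form r n A xs))"

end

theory Submission
  imports Defs
begin

text \<open>Embedding real unit vectors diagonally shows eta_p(A) \<le> \<parallel>A\<parallel>_p. Conversely, let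
  x(1), ..., x(r) be complex unit vectors. By the triangle inequality, |L_A(x(1), ..., x(r))| is at
  most the sum over index tuples i of a_i |x(1)_i1| ... |x(r)_ir|. Symmetry of A makes this sum
  invariant under cyclic rotation of the vectors, so it equals its average over the r rotations.
  For each tuple, AM-GM followed by the power-mean inequality (which needs p \<ge> r) bounds the
  average of the rotated products by z_i1 ... z_ir, where z_i is the p-power mean of
  |x(1)_i|, ..., |x(r)_i|. Since z is a real unit vector, |L_A| \<le> P_A(z) \<le> eta_p(A).\<close>

definition power_mean :: "real \<Rightarrow> nat \<Rightarrow> (nat \<Rightarrow> real) \<Rightarrow> real" where
  "power_mean p r u = ((\<Sum>k<r. u k powr p) / r) powr (1 / p)"

lemma power_mean_nonneg: "0 \<le> power_mean p r u"
  by (simp add: power_mean_def)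

lemma power_mean_powr:
  assumes "p \<noteq> 0"
  shows "power_mean p r u powr p = (\<Sum>k<r. u k powr p) / r"
  using assms sum_nonneg[of "{..<r}" "\<lambda>k. u k powr p"] by (simp add: power_mean_def powr_powr)

lemma add_mod_cancel_less:
  fixes r :: nat
  assumes "t < r" "t' < r" "(j + t) mod r = (j + t') mod r"
  shows "t = t'"
proof -
  have "r dvd (j + max t t') - (j + min t t')"
    using assms(3) mod_eq_dvd_iff_nat[of "j + min t t'" "j + max t t'" r]
    by (auto simp: min_def max_def)
  then have "max t t' - min t t' = 0"
    using assms(1,2) by (auto dest: dvd_imp_le)
  then show ?thesis by linarith
qed

lemma bij_betw_add_mod: "bij_betw (\<lambda>t. (j + t) mod r) {..<r} {..<(r::nat)}"
proof (rule bij_betw_imageI)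
  show inj: "inj_on (\<lambda>t. (j + t) mod r) {..<r}"
    by (rule inj_onI) (use add_mod_cancel_less in blast)
  show "(\<lambda>t. (j + t) mod r) ` {..<r} = {..<r}"
    by (rule endo_inj_surj[OF _ _ inj]) auto
qed

lemma sum_add_mod: "(\<Sum>t<r. f ((j + t) mod r)) = (\<Sum>k<(r::nat). f k)"
  using sum.reindex_bij_betw[OF bij_betw_add_mod] .

lemma add_mod_permutes: "(\<lambda>k. if k < r then (k + t) mod r else k) permutes {..<(r::nat)}"
proof (rule bij_imp_permutes)
  show "bij_betw (\<lambda>k. if k < r then (k + t) mod r else k) {..<r} {..<r}"
    by (rule bij_betw_cong[THEN iffD1, OF _ bij_betw_add_mod[of t]]) (auto simp: add.commute)
qed auto

lemma powr_le_tangent_line: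
  fixes b r p :: real
  assumes "0 \<le> b" "0 < r" "r \<le> p"
  shows "b powr r \<le> 1 + (r / p) * (b powr p - 1)"
proof (cases "b = 0")
  case True
  then show ?thesis using assms by (simp add: field_simps)
next
  case False
  then have "(b powr p) powr (r / p) * 1 powr (1 - r / p) \<le> (r / p) * b powr p + (1 - r / p) * 1"
    using assms by (intro Youngs_inequality_0) (auto simp: field_simps)
  moreover have "(b powr p) powr (r / p) = b powr r"
    using assms by (simp add: powr_powr)
  ultimately show ?thesis by (simp add: algebra_simps)
qed

lemma sum_powr_le_of_sum_powr_eq:
  fixes u :: "nat \<Rightarrow> real"
  assumes "0 < r" "r \<le> p" "\<And>k. 0 \<le> u k" "(\<Sum>k<m. u k powr p) = m"
  shows "(\<Sum>k<m. u k powr r) \<le> m"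
proof -
  have "(\<Sum>k<m. u k powr r) \<le> (\<Sum>k<m. 1 + (r / p) * (u k powr p - 1))"
    using assms by (intro sum_mono powr_le_tangent_line) auto
  also have "\<dots> = m + (r / p) * ((\<Sum>k<m. u k powr p) - m)"
    by (simp add: sum.distrib sum_distrib_left sum_subtractf algebra_simps)
  finally show ?thesis using assms(4) by simp
qed

lemma prod_le_average_powr:
  fixes u :: "nat \<Rightarrow> real"
  assumes "1 \<le> r" "\<And>j. j < r \<Longrightarrow> 0 \<le> u j"
  shows "(\<Prod>j<r. u j) \<le> (\<Sum>j<r. u j powr r) / r"
proof -
  have "(\<Prod>j<r. u j powr r) powr (1 / card {..<r}) \<le> (\<Sum>j<r. u j powr r / card {..<r})"
    using assms by (intro arith_geom_mean) (auto simp: lessThan_empty_iff)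
  moreover have "(\<Prod>j<r. u j powr r) = (\<Prod>j<r. u j) powr r"
    by (simp add: prod_powr_distrib)
  moreover have "((\<Prod>j<r. u j) powr r) powr (1 / r) = (\<Prod>j<r. u j)"
    using assms prod_nonneg[of "{..<r}" u] by (simp add: powr_powr)
  ultimately show ?thesis by (simp add: sum_divide_distrib)
qed

lemma sum_rotated_prod_le:
  fixes b :: "nat \<Rightarrow> nat \<Rightarrow> real"
  assumes r: "1 \<le> r" "real r \<le> p" and nonneg: "\<And>k j. 0 \<le> b k j"
    and normalized: "\<And>j. j < r \<Longrightarrow> (\<Sum>k<r. b k j powr p) = r"
  shows "(\<Sum>t<r. \<Prod>j<r. b ((j + t) mod r) j) \<le> r"
proof -
  have "(\<Sum>t<r. \<Prod>j<r. b ((j + t) mod r) j) \<le> (\<Sum>t<r. (\<Sum>j<r. b ((j + t) mod r) j powr r) / r)"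
    using r nonneg by (intro sum_mono prod_le_average_powr) auto
  also have "\<dots> = (\<Sum>j<r. \<Sum>t<r. b ((j + t) mod r) j powr r) / r"
    unfolding sum_divide_distrib[symmetric] by (rule arg_cong[where f = "\<lambda>x. x / r"], rule sum.swap)
  also have "\<dots> = (\<Sum>j<r. \<Sum>k<r. b k j powr r) / r"
    by (subst sum_add_mod) (rule refl)
  also have "\<dots> \<le> (\<Sum>j<r. real r) / r"
    using r nonneg normalized
    by (intro divide_right_mono sum_mono sum_powr_le_of_sum_powr_eq) auto
  finally show ?thesis using r by simp
qed

lemma sum_rotated_prod_le_of_power_mean_pos:
  fixes a :: "nat \<Rightarrow> nat \<Rightarrow> real"
  assumes r: "1 \<le> r" "real r \<le> p" and nonneg: "\<And>k j. 0 \<le> a k j"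
    and pos: "\<And>j. j < r \<Longrightarrow> 0 < power_mean p r (\<lambda>k. a k j)"
  shows "(\<Sum>t<r. \<Prod>j<r. a ((j + t) mod r) j) \<le> r * (\<Prod>j<r. power_mean p r (\<lambda>k. a k j))"
proof -
  define c where "c j = power_mean p r (\<lambda>k. a k j)" for j
  define b where "b k j = a k j / c j" for k j
  have "(\<Sum>k<r. b k j powr p) = r" if "j < r" for j
  proof -
    have "(\<Sum>k<r. b k j powr p) = (\<Sum>k<r. a k j powr p) / c j powr p"
      using nonneg power_mean_nonneg by (simp add: b_def c_def powr_divide sum_divide_distrib)
    moreover have "(\<Sum>k<r. a k j powr p) = r * c j powr p"
      using power_mean_powr[of p r] r by (simp add: c_def)
    ultimately show ?thesis
      using pos[OF that] by (simp add: c_def)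
  qed
  then have "(\<Sum>t<r. \<Prod>j<r. b ((j + t) mod r) j) \<le> r"
    using r nonneg power_mean_nonneg by (intro sum_rotated_prod_le) (auto simp: b_def c_def)
  moreover have "(\<Prod>j<r. a ((j + t) mod r) j) = (\<Prod>j<r. c j) * (\<Prod>j<r. b ((j + t) mod r) j)" for t
    using pos by (simp add: b_def c_def prod.distrib[symmetric] less_imp_neq[symmetric])
  moreover have "0 \<le> (\<Prod>j<r. c j)"
    by (simp add: c_def prod_nonneg power_mean_nonneg)
  ultimately have "(\<Sum>t<r. \<Prod>j<r. a ((j + t) mod r) j) \<le> (\<Prod>j<r. c j) * r"
    by (simp add: sum_distrib_left[symmetric] mult_left_mono)
  then show ?thesis
    by (simp add: c_def mult.commute)
qed

lemma sum_rotated_prod_eq_0_of_power_mean_eq_0: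
  fixes a :: "nat \<Rightarrow> nat \<Rightarrow> real"
  assumes "0 < p" "j < r" "power_mean p r (\<lambda>k. a k j) = 0"
  shows "(\<Sum>t<r. \<Prod>j<r. a ((j + t) mod r) j) = 0"
proof -
  have "(\<Sum>k<r. a k j powr p) = 0"
    using assms power_mean_powr[of p r "\<lambda>k. a k j"] by simp
  then have column_zero: "a k j = 0" if "k < r" for k
    using that by (simp add: sum_nonneg_eq_0_iff)
  have diagonal_zero: "(\<Prod>j<r. a ((j + t) mod r) j) = 0" for t
    using assms(2) column_zero[of "(j + t) mod r"] by (intro prod_zero) auto
  show ?thesis
    by (rule sum.neutral) (use diagonal_zero in blast)
qed

lemma average_rotated_prod_le_prod_power_mean:
  fixes a :: "nat \<Rightarrow> nat \<Rightarrow> real"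
  assumes r: "1 \<le> r" "real r \<le> p" and nonneg: "\<And>k j. 0 \<le> a k j"
  shows "(\<Sum>t<r. \<Prod>j<r. a ((j + t) mod r) j) / r \<le> (\<Prod>j<r. power_mean p r (\<lambda>k. a k j))"
proof (cases "\<exists>j<r. power_mean p r (\<lambda>k. a k j) = 0")
  case True
  moreover have "0 < p" using r by linarith
  ultimately show ?thesis
    using sum_rotated_prod_eq_0_of_power_mean_eq_0 power_mean_nonneg by (auto simp: prod_nonneg)
next
  case False
  then have "(\<Sum>t<r. \<Prod>j<r. a ((j + t) mod r) j) \<le> r * (\<Prod>j<r. power_mean p r (\<lambda>k. a k j))"
    using r nonneg power_mean_nonneg by (intro sum_rotated_prod_le_of_power_mean_pos) (auto simp: less_le)
  then show ?thesis
    using r by (simp add: field_simps)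
qed

lemma map_nth_in_index_tuples:
  assumes "\<And>k. k < r \<Longrightarrow> f k < r" "is \<in> index_tuples r n"
  shows "map (\<lambda>k. is ! f k) [0..<r] \<in> index_tuples r n"
  using assms by (fastforce simp: index_tuples_def dest: nth_mem)

lemma sum_symmetric_permute_factors:
  fixes y :: "nat \<Rightarrow> nat \<Rightarrow> real"
  assumes sym: "symmetric_cubical r n A" and \<sigma>: "\<sigma> permutes {..<r}"
  shows "(\<Sum>is\<in>index_tuples r n. A is * (\<Prod>k<r. y k (is ! k)))
       = (\<Sum>is\<in>index_tuples r n. A is * (\<Prod>j<r. y (\<sigma> j) (is ! j)))"
proof -
  define \<tau> where "\<tau> = inv \<sigma>"
  have \<tau>: "\<tau> permutes {..<r}"
    unfolding \<tau>_def by (rule permutes_inv[OF \<sigma>])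
  have \<sigma>_less: "\<sigma> k < r" and \<tau>_less: "\<tau> k < r" if "k < r" for k
    using permutes_in_image[OF \<sigma>] permutes_in_image[OF \<tau>] that by auto
  have \<sigma>_\<tau>: "\<sigma> (\<tau> k) = k" and \<tau>_\<sigma>: "\<tau> (\<sigma> k) = k" for k
    unfolding \<tau>_def using permutes_inverses[OF \<sigma>] by auto
  show ?thesis
  proof (rule sum.reindex_bij_witness[where j = "\<lambda>is. map (\<lambda>k. is ! \<sigma> k) [0..<r]"
                                         and i = "\<lambda>is. map (\<lambda>k. is ! \<tau> k) [0..<r]"])
    fix "is" assume "is": "is \<in> index_tuples r n"
    then have len: "length is = r" by (simp add: index_tuples_def)
    show "map (\<lambda>k. map (\<lambda>k. is ! \<sigma> k) [0..<r] ! \<tau> k) [0..<r] = is"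
      "map (\<lambda>k. map (\<lambda>k. is ! \<tau> k) [0..<r] ! \<sigma> k) [0..<r] = is"
      using len \<sigma>_less \<tau>_less \<sigma>_\<tau> \<tau>_\<sigma> by (auto intro: nth_equalityI)
    show "map (\<lambda>k. is ! \<sigma> k) [0..<r] \<in> index_tuples r n"
      "map (\<lambda>k. is ! \<tau> k) [0..<r] \<in> index_tuples r n"
      using "is" \<sigma>_less \<tau>_less by (auto intro: map_nth_in_index_tuples)
    have "A (map (\<lambda>k. is ! \<sigma> k) [0..<r]) = A is"
      using sym "is" \<sigma> unfolding symmetric_cubical_def by blast
    moreover have "(\<Prod>j<r. y (\<sigma> j) (is ! \<sigma> j)) = (\<Prod>k<r. y k (is ! k))"
      by (rule prod.reindex_bij_witness[where i = \<tau> and j = \<sigma>])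
         (use \<sigma>_less \<tau>_less \<sigma>_\<tau> \<tau>_\<sigma> in auto)
    ultimately show "A (map (\<lambda>k. is ! \<sigma> k) [0..<r]) *
        (\<Prod>j<r. y (\<sigma> j) (map (\<lambda>k. is ! \<sigma> k) [0..<r] ! j)) = A is * (\<Prod>k<r. y k (is ! k))"
      by simp
  qed
qed

lemma sum_prod_le_poly_form_power_mean:
  fixes y :: "nat \<Rightarrow> nat \<Rightarrow> real"
  assumes r: "1 \<le> r" "real r \<le> p" and sym: "symmetric_cubical r n A"
    and A_nonneg: "\<forall>is \<in> index_tuples r n. 0 \<le> A is" and y_nonneg: "\<And>k i. 0 \<le> y k i"
  shows "(\<Sum>is\<in>index_tuples r n. A is * (\<Prod>k<r. y k (is ! k)))
         \<le> poly_form r n A (\<lambda>i. power_mean p r (\<lambda>k. y k i))"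
proof -
  let ?I = "index_tuples r n"
  have rotate: "(\<Sum>is\<in>?I. A is * (\<Prod>k<r. y k (is ! k)))
              = (\<Sum>is\<in>?I. A is * (\<Prod>j<r. y ((j + t) mod r) (is ! j)))" for t
    using sum_symmetric_permute_factors[OF sym add_mod_permutes[of r t], of y] by simp
  have "(\<Sum>is\<in>?I. A is * (\<Prod>k<r. y k (is ! k)))
      = (\<Sum>t<r. \<Sum>is\<in>?I. A is * (\<Prod>j<r. y ((j + t) mod r) (is ! j))) / r"
    using r by (simp flip: rotate)
  also have "\<dots> = (\<Sum>is\<in>?I. A is * ((\<Sum>t<r. \<Prod>j<r. y ((j + t) mod r) (is ! j)) / r))"
    by (simp add: sum.swap[of _ "{..<r}"] sum_divide_distrib sum_distrib_left)
  also have "\<dots> \<le> (\<Sum>is\<in>?I. A is * (\<Prod>j<r. power_mean p r (\<lambda>k. y k (is ! j))))"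
    using A_nonneg y_nonneg r
    by (intro sum_mono mult_left_mono average_rotated_prod_le_prod_power_mean) auto
  finally show ?thesis by (simp add: poly_form_def)
qed

lemma lp_norm_real_eq_1_iff:
  assumes "0 < p"
  shows "lp_norm_real p n x = 1 \<longleftrightarrow> (\<Sum>i<n. \<bar>x i\<bar> powr p) = 1"
proof -
  define S where "S = (\<Sum>i<n. \<bar>x i\<bar> powr p)"
  have "(S powr (1 / p)) powr p = S"
    using assms sum_nonneg[of "{..<n}" "\<lambda>i. \<bar>x i\<bar> powr p"] by (simp add: S_def powr_powr)
  then show ?thesis
    by (auto simp: lp_norm_real_def simp flip: S_def)
qed

lemma lp_norm_complex_of_real:
  "lp_norm_complex p n (\<lambda>i. complex_of_real (x i)) = lp_norm_real p n x"
  by (simp add: lp_norm_complex_def lp_norm_real_def)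

lemma abs_le_1_if_lp_norm_real_eq_1:
  assumes "0 < p" "lp_norm_real p n x = 1" "i < n"
  shows "\<bar>x i\<bar> \<le> 1"
proof -
  have "\<bar>x i\<bar> powr p \<le> (\<Sum>i<n. \<bar>x i\<bar> powr p)"
    using assms(3) by (intro member_le_sum) auto
  then have "(\<bar>x i\<bar> powr p) powr (1 / p) \<le> 1 powr (1 / p)"
    using assms lp_norm_real_eq_1_iff by (intro powr_mono2) auto
  then show ?thesis
    using assms(1) by (simp add: powr_powr)
qed

lemma lp_norm_real_indicator:
  assumes "0 < p" "i < n"
  shows "lp_norm_real p n (\<lambda>j. if j = i then 1 else 0) = 1"
proof -
  have "(\<Sum>j<n. \<bar>if j = i then 1 else 0\<bar> powr p) = (\<Sum>j<n. if j = i then 1 else 0 :: real)"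
    by (rule sum.cong) auto
  then show ?thesis
    using assms by (simp add: lp_norm_real_eq_1_iff)
qed

lemma lp_norm_power_mean_eq_1:
  assumes "0 < p" "1 \<le> r" and unit: "\<forall>k<r. lp_norm_real p n (y k) = 1"
    and nonneg: "\<And>k i. 0 \<le> y k i"
  shows "lp_norm_real p n (\<lambda>i. power_mean p r (\<lambda>k. y k i)) = 1"
proof -
  have "(\<Sum>i<n. \<bar>power_mean p r (\<lambda>k. y k i)\<bar> powr p) = (\<Sum>k<r. \<Sum>i<n. y k i powr p) / r"
    using assms(1) power_mean_nonneg
    by (simp add: power_mean_powr sum_divide_distrib[symmetric] sum.swap[of _ "{..<n}"])
  also have "\<dots> = (\<Sum>k<r. 1) / r"
  proof (intro arg_cong[where f = "\<lambda>s. s / r"] sum.cong refl)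
    fix k assume "k \<in> {..<r}"
    then show "(\<Sum>i<n. y k i powr p) = 1"
      using unit nonneg assms(1) by (simp add: lp_norm_real_eq_1_iff abs_of_nonneg)
  qed
  also have "\<dots> = 1"
    using assms(2) by simp
  finally show ?thesis
    using assms(1) lp_norm_real_eq_1_iff by blast
qed

lemma abs_poly_form_le_sum:
  assumes "0 < p" and A_nonneg: "\<forall>is \<in> index_tuples r n. 0 \<le> A is"
    and unit: "lp_norm_real p n x = 1"
  shows "\<bar>poly_form r n A x\<bar> \<le> (\<Sum>is\<in>index_tuples r n. A is)"
proof -
  have "\<bar>poly_form r n A x\<bar> \<le> (\<Sum>is\<in>index_tuples r n. A is * (\<Prod>k<r. \<bar>x (is ! k)\<bar>))"
    unfolding poly_form_def using A_nonneg
    by (auto intro!: order.trans[OF sum_abs] sum_mono simp: abs_mult abs_prod)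
  also have "\<dots> \<le> (\<Sum>is\<in>index_tuples r n. A is * 1)"
  proof (intro sum_mono mult_left_mono prod_le_1 conjI)
    fix "is" k assume "is \<in> index_tuples r n" "k \<in> {..<r}"
    then have "is ! k < n"
      by (auto simp: index_tuples_def intro: nth_mem)
    then show "\<bar>x (is ! k)\<bar> \<le> 1"
      by (rule abs_le_1_if_lp_norm_real_eq_1[OF assms(1) unit])
  qed (use A_nonneg in auto)
  finally show ?thesis by simp
qed

lemma cmod_linear_form_le:
  assumes "\<forall>is \<in> index_tuples r n. 0 \<le> A is"
  shows "cmod (linear_form r n A xs)
         \<le> (\<Sum>is\<in>index_tuples r n. A is * (\<Prod>k<r. cmod (xs k (is ! k))))"
  unfolding linear_form_def using assms
  by (auto intro!: order.trans[OF norm_sum] sum_mono simp: norm_mult prod_norm[symmetric])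

lemma linear_form_of_real_diagonal:
  "linear_form r n A (\<lambda>k i. complex_of_real (x i)) = complex_of_real (poly_form r n A x)"
  by (simp add: poly_form_def linear_form_def)

lemma cmod_linear_form_le_poly_form:
  assumes r: "1 \<le> r" "real r \<le> p" and sym: "symmetric_cubical r n A"
    and A_nonneg: "\<forall>is \<in> index_tuples r n. 0 \<le> A is"
    and unit: "\<forall>k<r. lp_norm_complex p n (xs k) = 1"
  shows "\<exists>z. lp_norm_real p n z = 1 \<and> cmod (linear_form r n A xs) \<le> poly_form r n A z"
proof (intro exI conjI)
  let ?z = "\<lambda>i. power_mean p r (\<lambda>k. cmod (xs k i))"
  show "lp_norm_real p n ?z = 1"
    using r unit by (intro lp_norm_power_mean_eq_1) (auto simp: lp_norm_complex_def lp_norm_real_def)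
  show "cmod (linear_form r n A xs) \<le> poly_form r n A ?z"
    by (rule order.trans[OF cmod_linear_form_le[OF A_nonneg]
          sum_prod_le_poly_form_power_mean[OF r sym A_nonneg norm_ge_zero]])
qed

lemma cSUP_eq_of_dominated:
  fixes f :: "'a \<Rightarrow> 'c::conditionally_complete_lattice"
  assumes A: "A \<noteq> {}" and B: "B \<noteq> {}" and bounded: "bdd_above (f ` A)"
    and dom_f: "\<And>x. x \<in> A \<Longrightarrow> \<exists>y\<in>B. f x \<le> g y"
    and dom_g: "\<And>y. y \<in> B \<Longrightarrow> \<exists>x\<in>A. g y \<le> f x"
  shows "(SUP x\<in>A. f x) = (SUP y\<in>B. g y)"
proof -
  obtain M where M: "\<And>x. x \<in> A \<Longrightarrow> f x \<le> M"
    using bounded by (auto simp: bdd_above_def)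
  have "bdd_above (g ` B)"
  proof (rule bdd_aboveI2)
    fix y assume "y \<in> B"
    then obtain x where "x \<in> A" "g y \<le> f x" using dom_g by blast
    then show "g y \<le> M" using M order.trans by blast
  qed
  then show ?thesis
    using assms by (intro antisym cSUP_mono) auto
qed
theorem theorem2:
  fixes r n :: nat and p :: real and A :: "nat list \<Rightarrow> real"
  assumes "r \<ge> 2" and "n \<ge> 1"
    and "symmetric_cubical r n A"
    and "\<forall>is \<in> index_tuples r n. A is \<ge> 0"
    and "p \<ge> real r"
  shows "eta p r n A = spectral_norm p r n A"
proof -
  have r: "1 \<le> r" and p: "0 < p" using assms(1,5) by linarith+
  define S where "S = {x. lp_norm_real p n x = 1}"
  define T where "T = {xs. \<forall>k<r. lp_norm_complex p n (xs k) = 1}"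
  have diagonal: "(\<lambda>k i. complex_of_real (x i)) \<in> T \<and>
      cmod (linear_form r n A (\<lambda>k i. complex_of_real (x i))) = \<bar>poly_form r n A x\<bar>" if "x \<in> S" for x
    using that unfolding S_def T_def by (simp add: linear_form_of_real_diagonal lp_norm_complex_of_real)
  have "(\<lambda>j. if j = 0 then 1 else 0) \<in> S"
    unfolding S_def using assms(2) by (intro CollectI lp_norm_real_indicator[OF p]) linarith
  then have nonempty: "S \<noteq> {}" "T \<noteq> {}"
    using diagonal by blast+
  show ?thesis
    unfolding eta_def spectral_norm_def S_def[symmetric] T_def[symmetric]
  proof (rule cSUP_eq_of_dominated[OF nonempty])
    show "bdd_above ((\<lambda>x. \<bar>poly_form r n A x\<bar>) ` S)"
      using abs_poly_form_le_sum[OF p assms(4)] unfolding S_def by (intro bdd_aboveI2) simp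
    show "\<exists>xs\<in>T. \<bar>poly_form r n A x\<bar> \<le> cmod (linear_form r n A xs)" if "x \<in> S" for x
      using diagonal[OF that] by force
    show "\<exists>z\<in>S. cmod (linear_form r n A xs) \<le> \<bar>poly_form r n A z\<bar>" if "xs \<in> T" for xs
      using cmod_linear_form_le_poly_form[OF r assms(5,3,4), of xs] that
      unfolding S_def T_def by force
  qed
qed

end
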